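(* Let $\alpha\in(0,1)$ be irrational and let $B_1,B_2,\dots$ be the Minkowski chain of $\alpha$ (case $n=1$). Then $|\det B_k|=1$ for all $k\ge1$.
   Context: Minkowski chain: Let $n\ge1$, $\ell=n+1$, $(\alpha_1,\dots,\alpha_n)\in\mathbb{R}^n$ with $\alpha_1,\dots,\alpha_n,1$ linearly independent over $\mathbb{Q}$. For $r=(r_1,\dots,r_\ell)\in\mathbb{Z}^\ell$ put $\xi(r)=r_1\alpha_1+\cdots+r_n\alpha_n+r_\ell$. For a real matrix or vector, $\|\cdot\|_\infty$ is the maximum absolute value of its entries. For $m\in\mathbb{Z}^+$, $A_m$ is the nonsingular integral $\ell\times\ell$ matrix with rows $w_1,\dots,w_\ell$ chosen successively: $w_i$ is the vector $w\in\mathbb{Z}^\ell$ with $\|w\|_\infty\le m$, linearly independent of $w_1,\dots,w_{i-1}$, minimizing $|\xi(w)|$, normalized so that its first nonzero entry is positive (unique by the linear independence hypothesis). The Minkowski chain $B_1,B_2,\dots$ is the sequence of distinct matrices among $A_1,A_2,A_3,\dots$ in order of appearance ($B_1=A_1$). Here $n=1$ and $\alpha_1=\alpha$. *)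

theory Defs
  imports "HOL-Analysis.Analysis" "HOL-Library.Infinite_Set"
begin

text \<open>Minkowski chain in the case n = 1, l = 2. Integer vectors are elements of int^2,
  integral 2x2 matrices are elements of int^2^2 (rows w_1, w_2).\<close>

definition xi :: "real \<Rightarrow> int^2 \<Rightarrow> real" where
  "xi \<alpha> r = of_int (r$1) * \<alpha> + of_int (r$2)"

definition norm_inf :: "int^2 \<Rightarrow> int" where
  "norm_inf r = max \<bar>r$1\<bar> \<bar>r$2\<bar>"

text \<open>Embedding into real^2, used to express linear independence (over Q, equivalently over R).\<close>
definition emb :: "int^2 \<Rightarrow> real^2" where
  "emb r = (\<chi> i. real_of_int (r$i))"

definition normalized :: "int^2 \<Rightarrow> bool" where
  "normalized r \<longleftrightarrow> r$1 > 0 \<or> (r$1 = 0 \<and> r$2 > 0)"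

definition admissible :: "nat \<Rightarrow> (int^2) set \<Rightarrow> int^2 \<Rightarrow> bool" where
  "admissible m prev w \<longleftrightarrow> norm_inf w \<le> int m \<and> emb w \<notin> emb ` prev
      \<and> independent (insert (emb w) (emb ` prev))"

definition choose_row :: "real \<Rightarrow> nat \<Rightarrow> (int^2) set \<Rightarrow> int^2" where
  "choose_row \<alpha> m prev = (THE w. admissible m prev w \<and> normalized w
      \<and> (\<forall>v. admissible m prev v \<longrightarrow> \<bar>xi \<alpha> w\<bar> \<le> \<bar>xi \<alpha> v\<bar>))"

definition row1 :: "real \<Rightarrow> nat \<Rightarrow> int^2" where
  "row1 \<alpha> m = choose_row \<alpha> m {}"

definition row2 :: "real \<Rightarrow> nat \<Rightarrow> int^2" where
  "row2 \<alpha> m = choose_row \<alpha> m {row1 \<alpha> m}"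

definition A_mat :: "real \<Rightarrow> nat \<Rightarrow> int^2^2" where
  "A_mat \<alpha> m = (\<chi> i. if i = 1 then row1 \<alpha> m else row2 \<alpha> m)"

definition chain_indices :: "real \<Rightarrow> nat set" where
  "chain_indices \<alpha> = {m. 1 \<le> m \<and> (\<forall>j. 1 \<le> j \<and> j < m \<longrightarrow> A_mat \<alpha> j \<noteq> A_mat \<alpha> m)}"

definition minkowski_chain :: "real \<Rightarrow> nat \<Rightarrow> int^2^2" where
  "minkowski_chain \<alpha> k = A_mat \<alpha> (enumerate (chain_indices \<alpha>) (k - 1))"

end

theory Submission
  imports Defs
begin

text \<open>Every A_m is unimodular. Its first row w1 minimises |xi| over the nonzero vectors of
  the box of size m, its second row w2 over the vectors of the box not parallel to w1, and
  irrationality forces |xi w1| < |xi w2|. Reducing an integer vector modulo the lattice spanned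
  by w1, w2 leaves a residual s w1 + t w2 with |s|, |t| <= 1/2, which still lies in the box:
  if t \<noteq> 0 it would beat w2, and if t = 0 \<noteq> s it would beat w1. So w1, w2 span
  the integer lattice and det A_m = \<plusminus>1. The chain is infinite because, by Dirichlet's
  theorem, |xi w1| becomes arbitrarily small, so every B_k is some A_m.\<close>

definition cross :: "int^2 \<Rightarrow> int^2 \<Rightarrow> int" where
  "cross v w = v$1 * w$2 - v$2 * w$1"

lemma vec2_eq_iff: "(v::'a^2) = w \<longleftrightarrow> v$1 = w$1 \<and> v$2 = w$2"
  by (simp add: vec_eq_iff forall_2)

lemma cross_commute: "cross w v = - cross v w"
  by (simp add: cross_def)

lemma cross_lincomb:
  "cross (a *s u + b *s v) (c *s u + d *s v) = (a * d - b * c) * cross u v"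
  by (simp add: cross_def algebra_simps)

lemma det_A_mat: "det (A_mat \<alpha> m) = cross (row1 \<alpha> m) (row2 \<alpha> m)"
  by (simp add: det_2 A_mat_def cross_def)

lemma norm_inf_le_iff: "norm_inf w \<le> M \<longleftrightarrow> \<bar>w$1\<bar> \<le> M \<and> \<bar>w$2\<bar> \<le> M"
  by (simp add: norm_inf_def)

lemma norm_inf_uminus [simp]: "norm_inf (- w) = norm_inf w"
  by (simp add: norm_inf_def)

lemma norm_inf_pos: "w \<noteq> 0 \<Longrightarrow> 0 < norm_inf w"
  by (auto simp: norm_inf_def vec2_eq_iff)

lemma finite_norm_inf_le: "finite {w::int^2. norm_inf w \<le> M}"
proof (rule finite_subset)
  show "{w::int^2. norm_inf w \<le> M} \<subseteq> (\<lambda>(p, q). vector [p, q]) ` ({-M..M} \<times> {-M..M})"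
  proof
    fix w :: "int^2"
    assume "w \<in> {w. norm_inf w \<le> M}"
    then have "(w$1, w$2) \<in> {-M..M} \<times> {-M..M}" by (auto simp: norm_inf_def)
    moreover have "w = vector [w$1, w$2]" by (simp add: vec2_eq_iff)
    ultimately show "w \<in> (\<lambda>(p, q). vector [p, q]) ` ({-M..M} \<times> {-M..M})"
      by (metis (no_types, lifting) case_prod_conv image_eqI)
  qed
qed simp

lemma xi_eq_iff:
  assumes "\<alpha> \<notin> \<rat>"
  shows "xi \<alpha> v = xi \<alpha> w \<longleftrightarrow> v = w"
proof
  assume eq: "xi \<alpha> v = xi \<alpha> w"
  show "v = w"
  proof (cases "v$1 = w$1")
    case True
    then show ?thesis using eq by (simp add: xi_def vec2_eq_iff)
  next
    case False
    then have "\<alpha> = of_int (w$2 - v$2) / of_int (v$1 - w$1)"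
      using eq by (simp add: xi_def field_simps)
    then have "\<alpha> \<in> \<rat>" by simp
    then show ?thesis using assms by simp
  qed
qed simp

lemma xi_uminus [simp]: "xi \<alpha> (- v) = - xi \<alpha> v"
  by (simp add: xi_def)

lemma xi_eq_0_iff: "\<alpha> \<notin> \<rat> \<Longrightarrow> xi \<alpha> v = 0 \<longleftrightarrow> v = 0"
  using xi_eq_iff[of \<alpha> v 0] by (simp add: xi_def)

lemma abs_xi_eq_iff: "\<alpha> \<notin> \<rat> \<Longrightarrow> \<bar>xi \<alpha> v\<bar> = \<bar>xi \<alpha> w\<bar> \<longleftrightarrow> v = w \<or> v = - w"
  by (metis abs_eq_iff xi_eq_iff xi_uminus)

lemma emb_eq_0_iff: "emb w = 0 \<longleftrightarrow> w = 0"
  by (simp add: emb_def vec2_eq_iff)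

lemma emb_in_span_singleton_iff:
  assumes "w1 \<noteq> 0"
  shows "emb w \<in> span {emb w1} \<longleftrightarrow> cross w w1 = 0"
proof
  assume "emb w \<in> span {emb w1}"
  then obtain k where "emb w = k *\<^sub>R emb w1" by (auto simp: span_singleton)
  then have "real_of_int (w$1) = k * w1$1" "real_of_int (w$2) = k * w1$2"
    by (auto simp: emb_def vec_eq_iff)
  then have "real_of_int (cross w w1) = 0" by (simp add: cross_def)
  then show "cross w w1 = 0" by simp
next
  assume "cross w w1 = 0"
  then have cr: "real_of_int (w$1) * w1$2 = real_of_int (w$2) * w1$1"
    by (simp add: cross_def flip: of_int_mult)
  consider "w1$1 \<noteq> 0" | "w1$2 \<noteq> 0" using assms by (auto simp: vec2_eq_iff)
  then obtain k where "emb w = k *\<^sub>R emb w1"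
  proof cases
    case 1
    with cr have "emb w = (w$1 / w1$1) *\<^sub>R emb w1"
      by (simp add: emb_def vec2_eq_iff field_simps)
    then show ?thesis using that by blast
  next
    case 2
    with cr have "emb w = (w$2 / w1$2) *\<^sub>R emb w1"
      by (simp add: emb_def vec2_eq_iff field_simps)
    then show ?thesis using that by blast
  qed
  then show "emb w \<in> span {emb w1}" by (auto simp: span_singleton)
qed

lemma admissible_empty_iff: "admissible m {} w \<longleftrightarrow> norm_inf w \<le> int m \<and> w \<noteq> 0"
  by (simp add: admissible_def emb_eq_0_iff)

lemma admissible_singleton_iff:
  assumes "w1 \<noteq> 0"
  shows "admissible m {w1} w \<longleftrightarrow> norm_inf w \<le> int m \<and> cross w w1 \<noteq> 0"
proof -
  have "emb w1 \<noteq> 0" using assms by (simp add: emb_eq_0_iff)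
  then have "(emb w \<noteq> emb w1 \<and> independent (insert (emb w) {emb w1}))
      \<longleftrightarrow> emb w \<notin> span {emb w1}"
    by (auto simp: independent_insert span_base)
  then show ?thesis
    by (auto simp: admissible_def emb_in_span_singleton_iff[OF assms])
qed

lemma choose_row_props:
  assumes irr: "\<alpha> \<notin> \<rat>" and fin: "finite {w. admissible m prev w}"
    and w0: "admissible m prev w0"
    and uminus: "\<And>w. admissible m prev w \<Longrightarrow> admissible m prev (- w)"
    and nonzero: "\<And>w. admissible m prev w \<Longrightarrow> w \<noteq> 0"
  shows "admissible m prev (choose_row \<alpha> m prev) \<and> normalized (choose_row \<alpha> m prev)
    \<and> (\<forall>v. admissible m prev v \<longrightarrow> \<bar>xi \<alpha> (choose_row \<alpha> m prev)\<bar> \<le> \<bar>xi \<alpha> v\<bar>)"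
proof -
  define Q where "Q w \<longleftrightarrow> admissible m prev w \<and> normalized w
      \<and> (\<forall>v. admissible m prev v \<longrightarrow> \<bar>xi \<alpha> w\<bar> \<le> \<bar>xi \<alpha> v\<bar>)" for w
  obtain w where w: "admissible m prev w"
    and w_min: "\<forall>v. admissible m prev v \<longrightarrow> \<bar>xi \<alpha> w\<bar> \<le> \<bar>xi \<alpha> v\<bar>"
    using ex_is_arg_min_if_finite[OF fin, of "\<lambda>v. \<bar>xi \<alpha> v\<bar>"] w0
    by (fastforce simp: is_arg_min_def not_less)
  have "normalized w \<or> normalized (- w)"
    using nonzero[OF w] by (auto simp: normalized_def vec2_eq_iff)
  then have "\<exists>u. Q u"
    using w w_min uminus unfolding Q_def by (metis abs_minus_cancel xi_uminus)
  moreover have "u = v" if "Q u" "Q v" for u v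
  proof -
    have "\<bar>xi \<alpha> u\<bar> = \<bar>xi \<alpha> v\<bar>" using that by (simp add: Q_def order_antisym)
    then have "u = v \<or> u = - v" using abs_xi_eq_iff[OF irr] by blast
    moreover have "\<not> (normalized v \<and> normalized (- v))" by (auto simp: normalized_def)
    ultimately show ?thesis using that by (auto simp: Q_def)
  qed
  ultimately have "Q (THE w. Q w)" by (metis theI)
  then show ?thesis by (simp add: Q_def choose_row_def)
qed

lemma row1_minimal:
  assumes irr: "\<alpha> \<notin> \<rat>" and "1 \<le> m"
  shows "norm_inf (row1 \<alpha> m) \<le> int m" and "row1 \<alpha> m \<noteq> 0"
    and "\<And>v. norm_inf v \<le> int m \<Longrightarrow> v \<noteq> 0 \<Longrightarrow> \<bar>xi \<alpha> (row1 \<alpha> m)\<bar> \<le> \<bar>xi \<alpha> v\<bar>"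
proof -
  have fin: "finite {w. admissible m {} w}"
    by (rule finite_subset[OF _ finite_norm_inf_le[of "int m"]]) (auto simp: admissible_empty_iff)
  have w0: "admissible m {} (vector [1, 0])"
    using \<open>1 \<le> m\<close> by (simp add: admissible_empty_iff norm_inf_def vec2_eq_iff)
  have "admissible m {} (row1 \<alpha> m) \<and> normalized (row1 \<alpha> m)
      \<and> (\<forall>v. admissible m {} v \<longrightarrow> \<bar>xi \<alpha> (row1 \<alpha> m)\<bar> \<le> \<bar>xi \<alpha> v\<bar>)"
    unfolding row1_def by (rule choose_row_props[OF irr fin w0]) (auto simp: admissible_empty_iff)
  then show "norm_inf (row1 \<alpha> m) \<le> int m" "row1 \<alpha> m \<noteq> 0"
    and "\<And>v. norm_inf v \<le> int m \<Longrightarrow> v \<noteq> 0 \<Longrightarrow> \<bar>xi \<alpha> (row1 \<alpha> m)\<bar> \<le> \<bar>xi \<alpha> v\<bar>"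
    by (auto simp: admissible_empty_iff)
qed

lemma row2_minimal:
  assumes irr: "\<alpha> \<notin> \<rat>" and "1 \<le> m"
  shows "norm_inf (row2 \<alpha> m) \<le> int m" and "cross (row2 \<alpha> m) (row1 \<alpha> m) \<noteq> 0"
    and "\<And>v. norm_inf v \<le> int m \<Longrightarrow> cross v (row1 \<alpha> m) \<noteq> 0
      \<Longrightarrow> \<bar>xi \<alpha> (row2 \<alpha> m)\<bar> \<le> \<bar>xi \<alpha> v\<bar>"
proof -
  define w1 where "w1 = row1 \<alpha> m"
  have "w1 \<noteq> 0" using row1_minimal[OF assms] by (simp add: w1_def)
  note adm = admissible_singleton_iff[OF this]
  have fin: "finite {w. admissible m {w1} w}"
    by (rule finite_subset[OF _ finite_norm_inf_le[of "int m"]]) (auto simp: adm)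
  obtain w0 where w0: "admissible m {w1} w0"
  proof (cases "w1$1 = 0")
    case True
    with \<open>w1 \<noteq> 0\<close> have "admissible m {w1} (vector [1, 0])"
      using \<open>1 \<le> m\<close> by (simp add: adm norm_inf_def cross_def vec2_eq_iff)
    then show ?thesis using that by blast
  next
    case False
    then have "admissible m {w1} (vector [0, 1])"
      using \<open>1 \<le> m\<close> by (simp add: adm norm_inf_def cross_def)
    then show ?thesis using that by blast
  qed
  have "admissible m {w1} (choose_row \<alpha> m {w1}) \<and> normalized (choose_row \<alpha> m {w1})
      \<and> (\<forall>v. admissible m {w1} v \<longrightarrow> \<bar>xi \<alpha> (choose_row \<alpha> m {w1})\<bar> \<le> \<bar>xi \<alpha> v\<bar>)"
    by (rule choose_row_props[OF irr fin w0]) (auto simp: adm cross_def algebra_simps)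
  then show "norm_inf (row2 \<alpha> m) \<le> int m" "cross (row2 \<alpha> m) (row1 \<alpha> m) \<noteq> 0"
    and "\<And>v. norm_inf v \<le> int m \<Longrightarrow> cross v (row1 \<alpha> m) \<noteq> 0
      \<Longrightarrow> \<bar>xi \<alpha> (row2 \<alpha> m)\<bar> \<le> \<bar>xi \<alpha> v\<bar>"
    unfolding row2_def w1_def[symmetric] by (auto simp: adm)
qed

lemma lattice_residual:
  assumes "cross w1 w2 \<noteq> 0"
  obtains S T :: int and s t :: real
  where "\<bar>s\<bar> \<le> 1/2" and "\<bar>t\<bar> \<le> 1/2"
    and "\<And>i. real_of_int ((v - S *s w1 - T *s w2)$i) = s * w1$i + t * w2$i"
proof -
  define a where "a = real_of_int (cross v w2) / cross w1 w2"
  define b where "b = real_of_int (cross w1 v) / cross w1 w2"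
  have "real_of_int (cross w1 w2) * v$i
      = real_of_int (cross v w2) * w1$i + real_of_int (cross w1 v) * w2$i" for i
    using exhaust_2[of i] by (auto simp: cross_def algebra_simps)
  moreover have "real_of_int (cross w1 w2) \<noteq> 0" using assms by simp
  ultimately have cramer: "real_of_int (v$i) = a * w1$i + b * w2$i" for i
    by (simp add: a_def b_def field_simps)
  show thesis
  proof
    show "\<bar>a - round a\<bar> \<le> 1/2" "\<bar>b - round b\<bar> \<le> 1/2"
      using of_int_round_abs_le[of a] of_int_round_abs_le[of b] by linarith+
    show "real_of_int ((v - round a *s w1 - round b *s w2)$i)
        = (a - round a) * w1$i + (b - round b) * w2$i" for i
      using cramer[of i] by (simp add: algebra_simps)
  qed
qed

lemma abs_xi_less_of_minimal:
  assumes irr: "\<alpha> \<notin> \<rat>"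
    and min1: "\<And>v. norm_inf v \<le> m \<Longrightarrow> v \<noteq> 0 \<Longrightarrow> \<bar>xi \<alpha> w1\<bar> \<le> \<bar>xi \<alpha> v\<bar>"
    and "norm_inf w2 \<le> m" and "cross w2 w1 \<noteq> 0"
  shows "\<bar>xi \<alpha> w1\<bar> < \<bar>xi \<alpha> w2\<bar>"
proof -
  have "w2 \<noteq> 0" using \<open>cross w2 w1 \<noteq> 0\<close> by (auto simp: cross_def)
  then have "\<bar>xi \<alpha> w1\<bar> \<le> \<bar>xi \<alpha> w2\<bar>" using min1 \<open>norm_inf w2 \<le> m\<close> by blast
  moreover have "w1 \<noteq> w2 \<and> w1 \<noteq> - w2" using \<open>cross w2 w1 \<noteq> 0\<close> by (auto simp: cross_def)
  ultimately show ?thesis using abs_xi_eq_iff[OF irr] by fastforce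
qed

lemma norm_inf_le_of_half_combination:
  fixes s t :: real
  assumes "norm_inf w1 \<le> m" "norm_inf w2 \<le> m" and "\<bar>s\<bar> \<le> 1/2" "\<bar>t\<bar> \<le> 1/2"
    and r: "\<And>i. real_of_int (r$i) = s * w1$i + t * w2$i"
  shows "norm_inf r \<le> m"
proof -
  have "\<bar>r$i\<bar> \<le> m" for i
  proof -
    have "\<bar>w1$i\<bar> \<le> m" "\<bar>w2$i\<bar> \<le> m"
      using assms(1,2) exhaust_2[of i] by (auto simp: norm_inf_le_iff)
    then have "\<bar>s\<bar> * \<bar>w1$i\<bar> + \<bar>t\<bar> * \<bar>w2$i\<bar> \<le> 1/2 * m + 1/2 * m"
      using assms(3,4) by (intro add_mono mult_mono) auto
    moreover have "\<bar>real_of_int (r$i)\<bar> \<le> \<bar>s\<bar> * \<bar>w1$i\<bar> + \<bar>t\<bar> * \<bar>w2$i\<bar>"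
      unfolding r by (metis abs_mult abs_triangle_ineq of_int_abs)
    ultimately show ?thesis by linarith
  qed
  then show ?thesis by (simp add: norm_inf_le_iff)
qed

lemma minimal_pair_spans:
  fixes m :: int
  assumes irr: "\<alpha> \<notin> \<rat>"
    and w1: "norm_inf w1 \<le> m" "w1 \<noteq> 0"
    and min1: "\<And>v. norm_inf v \<le> m \<Longrightarrow> v \<noteq> 0 \<Longrightarrow> \<bar>xi \<alpha> w1\<bar> \<le> \<bar>xi \<alpha> v\<bar>"
    and w2: "norm_inf w2 \<le> m" "cross w2 w1 \<noteq> 0"
    and min2: "\<And>v. norm_inf v \<le> m \<Longrightarrow> cross v w1 \<noteq> 0 \<Longrightarrow> \<bar>xi \<alpha> w2\<bar> \<le> \<bar>xi \<alpha> v\<bar>"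
  shows "\<exists>S T. v = S *s w1 + T *s w2"
proof -
  have "cross w1 w2 \<noteq> 0" using w2(2) cross_commute[of w2 w1] by simp
  then obtain S T :: int and s t :: real
    where st: "\<bar>s\<bar> \<le> 1/2" "\<bar>t\<bar> \<le> 1/2"
      and residual: "\<And>i. real_of_int ((v - S *s w1 - T *s w2)$i) = s * w1$i + t * w2$i"
    using lattice_residual[of w1 w2 v] by metis
  define r where "r = v - S *s w1 - T *s w2"
  have r: "real_of_int (r$i) = s * w1$i + t * w2$i" for i
    using residual by (simp add: r_def)
  define x1 where "x1 = xi \<alpha> w1"
  define x2 where "x2 = xi \<alpha> w2"
  have r_small: "norm_inf r \<le> m"
    using norm_inf_le_of_half_combination[OF w1(1) w2(1) st r] .
  have xi_r: "xi \<alpha> r = s * x1 + t * x2"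
    using r[of 1] r[of 2] by (simp add: x1_def x2_def xi_def algebra_simps)
  have lt: "\<bar>x1\<bar> < \<bar>x2\<bar>"
    unfolding x1_def x2_def using abs_xi_less_of_minimal[OF irr min1 w2] .
  have "t = 0"
  proof (rule ccontr)
    assume "t \<noteq> 0"
    have "real_of_int (cross r w1) = t * cross w2 w1"
      using r[of 1] r[of 2] by (simp add: cross_def algebra_simps)
    then have "cross r w1 \<noteq> 0" using \<open>t \<noteq> 0\<close> w2(2) by auto
    then have "\<bar>x2\<bar> \<le> \<bar>s * x1 + t * x2\<bar>"
      using min2[OF r_small] xi_r x2_def by simp
    also have "\<dots> \<le> \<bar>s\<bar> * \<bar>x1\<bar> + \<bar>t\<bar> * \<bar>x2\<bar>"
      by (metis abs_mult abs_triangle_ineq)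
    also have "\<dots> \<le> 1/2 * \<bar>x1\<bar> + 1/2 * \<bar>x2\<bar>"
      using st by (intro add_mono mult_right_mono) auto
    finally show False using lt by simp
  qed
  have "s = 0"
  proof (rule ccontr)
    assume "s \<noteq> 0"
    obtain i where "w1$i \<noteq> 0" using w1(2) by (auto simp: vec_eq_iff)
    then have "r \<noteq> 0" using r[of i] \<open>s \<noteq> 0\<close> \<open>t = 0\<close> by auto
    have "\<bar>x1\<bar> \<le> \<bar>xi \<alpha> r\<bar>" using min1[OF r_small \<open>r \<noteq> 0\<close>] by (simp add: x1_def)
    also have "\<dots> = \<bar>s\<bar> * \<bar>x1\<bar>" using xi_r \<open>t = 0\<close> by (simp add: abs_mult)
    also have "\<dots> \<le> 1/2 * \<bar>x1\<bar>" using st by (intro mult_right_mono) auto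
    finally have "x1 = 0" by simp
    then show False using w1(2) xi_eq_0_iff[OF irr, of w1] by (simp add: x1_def)
  qed
  have "r$i = 0" for i using r[of i] \<open>s = 0\<close> \<open>t = 0\<close> by simp
  then have "r = 0" by (simp add: vec_eq_iff)
  then show ?thesis unfolding r_def by (metis diff_diff_eq eq_iff_diff_eq_0)
qed

lemma abs_cross_eq_1_if_spans:
  assumes "\<And>v. \<exists>S T. v = S *s w1 + T *s w2"
  shows "\<bar>cross w1 w2\<bar> = 1"
proof -
  obtain S1 T1 S2 T2 where "vector [1, 0] = S1 *s w1 + T1 *s w2" "vector [0, 1] = S2 *s w1 + T2 *s w2"
    using assms by meson
  then have "cross (vector [1, 0]) (vector [0, 1]) = (S1 * T2 - T1 * S2) * cross w1 w2"
    by (simp add: cross_lincomb)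
  moreover have "cross (vector [1, 0]) (vector [0, 1]) = 1" by (simp add: cross_def)
  ultimately have "cross w1 w2 dvd 1" by (metis dvd_triv_right)
  then show ?thesis by simp
qed

lemma abs_det_A_mat:
  assumes irr: "\<alpha> \<notin> \<rat>" and "1 \<le> m"
  shows "\<bar>det (A_mat \<alpha> m)\<bar> = 1"
  unfolding det_A_mat
  using minimal_pair_spans[OF irr row1_minimal[OF assms] row2_minimal[OF assms]]
  by (rule abs_cross_eq_1_if_spans)

lemma exists_small_xi:
  assumes "0 < \<epsilon>"
  obtains v where "v \<noteq> 0" and "\<bar>xi \<alpha> v\<bar> < \<epsilon>"
proof -
  obtain N :: nat where N: "0 < N" "inverse (real N) < \<epsilon>"
    using ex_inverse_of_nat_less[OF assms] by blast
  obtain q p where "0 < q"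
    and qp: "\<And>i::nat. i < 1 \<Longrightarrow> \<bar>of_int q * \<alpha> - of_int (p i)\<bar> < 1 / real N"
    using Dirichlet_approx_simult[OF N(1), where \<theta> = "\<lambda>_. \<alpha>" and n = 1] by metis
  show thesis
  proof
    show "vector [q, - p 0] \<noteq> (0 :: int^2)"
      using \<open>0 < q\<close> by (simp add: vec2_eq_iff)
    show "\<bar>xi \<alpha> (vector [q, - p 0])\<bar> < \<epsilon>"
      using qp[of 0] N(2) by (simp add: xi_def inverse_eq_divide)
  qed
qed

lemma row1_abs_xi_arbitrarily_small:
  assumes irr: "\<alpha> \<notin> \<rat>" and "0 < \<epsilon>"
  obtains m where "1 \<le> m" and "\<bar>xi \<alpha> (row1 \<alpha> m)\<bar> < \<epsilon>"
proof -
  obtain v where "v \<noteq> 0" and v_small: "\<bar>xi \<alpha> v\<bar> < \<epsilon>"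
    using exists_small_xi[OF \<open>0 < \<epsilon>\<close>] by blast
  define m where "m = nat (norm_inf v)"
  have "0 < norm_inf v" using \<open>v \<noteq> 0\<close> by (rule norm_inf_pos)
  then have "1 \<le> m" and "norm_inf v \<le> int m" by (simp_all add: m_def)
  then have "\<bar>xi \<alpha> (row1 \<alpha> m)\<bar> \<le> \<bar>xi \<alpha> v\<bar>"
    using row1_minimal(3)[OF irr \<open>1 \<le> m\<close>] \<open>v \<noteq> 0\<close> by blast
  then show thesis using that \<open>1 \<le> m\<close> v_small by simp
qed

lemma chain_index_with_same_matrix:
  assumes "1 \<le> m"
  obtains j where "j \<in> chain_indices \<alpha>" and "A_mat \<alpha> j = A_mat \<alpha> m"
proof -
  define P where "P j \<longleftrightarrow> 1 \<le> j \<and> A_mat \<alpha> j = A_mat \<alpha> m" for j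
  have "P m" using assms by (simp add: P_def)
  then have "P (LEAST j. P j)" by (rule LeastI)
  moreover have "A_mat \<alpha> i \<noteq> A_mat \<alpha> (LEAST j. P j)" if "1 \<le> i" "i < (LEAST j. P j)" for i
    using not_less_Least[OF that(2)] that(1) \<open>P (LEAST j. P j)\<close> by (auto simp: P_def)
  ultimately show thesis
    using that by (auto simp: chain_indices_def P_def)
qed

lemma infinite_chain_indices:
  assumes irr: "\<alpha> \<notin> \<rat>"
  shows "infinite (chain_indices \<alpha>)"
proof
  assume "finite (chain_indices \<alpha>)"
  define R where "R = row1 \<alpha> ` chain_indices \<alpha>"
  have "finite R" "R \<noteq> {}"
    using \<open>finite (chain_indices \<alpha>)\<close> by (auto simp: R_def chain_indices_def)
  have row1_in_R: "row1 \<alpha> m \<in> R" if m: "1 \<le> m" for m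
  proof -
    obtain j where "j \<in> chain_indices \<alpha>" "A_mat \<alpha> j = A_mat \<alpha> m"
      using chain_index_with_same_matrix[OF m] .
    then have "A_mat \<alpha> m $ 1 = A_mat \<alpha> j $ 1" by simp
    then have "row1 \<alpha> m = row1 \<alpha> j" by (simp add: A_mat_def)
    then show ?thesis using \<open>j \<in> chain_indices \<alpha>\<close> by (simp add: R_def)
  qed
  define c where "c = Min ((\<lambda>w. \<bar>xi \<alpha> w\<bar>) ` R)"
  have "0 < \<bar>xi \<alpha> w\<bar>" if "w \<in> R" for w
    using that row1_minimal(2)[OF irr] xi_eq_0_iff[OF irr]
    by (auto simp: R_def chain_indices_def)
  then have "0 < c"
    unfolding c_def using \<open>finite R\<close> \<open>R \<noteq> {}\<close> by (subst Min_gr_iff) auto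
  then obtain m where "1 \<le> m" and "\<bar>xi \<alpha> (row1 \<alpha> m)\<bar> < c"
    using row1_abs_xi_arbitrarily_small[OF irr] by blast
  moreover have "c \<le> \<bar>xi \<alpha> (row1 \<alpha> m)\<bar>"
    unfolding c_def using \<open>finite R\<close> row1_in_R[OF \<open>1 \<le> m\<close>] by simp
  ultimately show False by simp
qed

theorem mainTheorem2:
  fixes \<alpha> :: real and k :: nat
  assumes "0 < \<alpha>" and "\<alpha> < 1" and "\<alpha> \<notin> \<rat>" and "1 \<le> k"
  shows "\<bar>det (minkowski_chain \<alpha> k)\<bar> = 1"
proof -
  have "enumerate (chain_indices \<alpha>) (k - 1) \<in> chain_indices \<alpha>"
    using infinite_chain_indices[OF \<open>\<alpha> \<notin> \<rat>\<close>] by (rule enumerate_in_set)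
  then have "1 \<le> enumerate (chain_indices \<alpha>) (k - 1)" by (simp add: chain_indices_def)
  then show ?thesis
    unfolding minkowski_chain_def by (rule abs_det_A_mat[OF \<open>\<alpha> \<notin> \<rat>\<close>])
qed

end
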